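(* Let $a,b\in(\frac1{10},10)$, $A=\begin{pmatrix}a&0\\0&b\end{pmatrix}$, and for integers $1\le k\le k'\le2k$ let $u_1=\cos(kx)e^{-k\sqrt a\,t}$, $u_2=\cos(k'y)e^{-k'\sqrt b\,t}$ (solutions of $\ddot u+\operatorname{div}(A\nabla u)=0$). There exist universal constants $D>0$ and $M$ such that for every $0<\varepsilon<D$ and all such $k,k'$ with $\varepsilon^{-1/4}\le k,k'\le\varepsilon^{-1/3}$: (i) there exist a $C^2$ function $u$ and a $C^1$ real $2\times 2$ matrix function $\tilde A$ in the regularity class $R(20,10)$ with $\ddot u+\operatorname{div}(\tilde A\nabla u)=0$ on $\mathbb{T}^2\times\mathbb{R}$, $u=u_1$ and $\tilde A=A$ for $t\le0$, $u=u_1+\varepsilon u_2$ and $\tilde A=A$ for $t\ge\varepsilon^{1/3}$; and for $t\in[0,\varepsilon^{1/3}]$, $u=f(t)\cos(kx)+g(t)\cos(k'y)$ with $f,g\in C^2$, $|f^{(\alpha)}(t)|\le Mk^\alpha e^{-k\sqrt a\,t}$ and $|g^{(\alpha)}(t)|\le M(k')^\alpha\varepsilon^{(3-\alpha)/3}e^{-k'\sqrt b\,t}$ for $0\le\alpha\le2$; (ii) similarly there exist such $u,\tilde A$ (same regularity class, same time interval $[0,\varepsilon^{1/3}]$) with $u=\varepsilon u_1+u_2$ for $t\le0$ and $u=u_2$ for $t\ge\varepsilon^{1/3}$, $\tilde A=A$ outside $[0,\varepsilon^{1/3}]$, and for $t\in[0,\varepsilon^{1/3}]$, $u=f(t)\cos(kx)+g(t)\cos(k'y)$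 with $f,g\in C^2$, $|f^{(\alpha)}(t)|\le Mk^\alpha\varepsilon^{(3-\alpha)/3}e^{-k\sqrt a\,t}$ and $|g^{(\alpha)}(t)|\le M(k')^\alpha e^{-k'\sqrt b\,t}$ for $0\le\alpha\le2$.
   Context: $\mathbb{T}^2=(\mathbb{R}/2\pi\mathbb{Z})^2$ with coordinates $(x,y)$; $t$ the third coordinate. $\ddot u+\operatorname{div}(A\nabla u)$ means $\partial_t^2u+\sum_{i,j\in\{x,y\}}\partial_i(A_{ij}\partial_ju)$. Regularity class $R(\Lambda,C)$: $\Lambda^{-1}|\xi|^2\le\xi^TA\xi\le\Lambda|\xi|^2$ for all $\xi\in\mathbb{R}^2$ at every point, and the entries of $A$ are $C^1$ with all first partial derivatives in $x,y,t$ bounded by $C$ in absolute value. *)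

theory Defs
  imports "HOL-Analysis.Analysis"
begin

type_synonym pt = "real \<times> real \<times> real"   (* (x, y, t) *)

definition ex :: pt where "ex = (1, 0, 0)"
definition ey :: pt where "ey = (0, 1, 0)"
definition et :: pt where "et = (0, 0, 1)"

definition sdir :: "2 \<Rightarrow> pt" where "sdir i = (if i = 1 then ex else ey)"

definition pd :: "(pt \<Rightarrow> real) \<Rightarrow> pt \<Rightarrow> pt \<Rightarrow> real" where
  "pd f v p = frechet_derivative f (at p) v"

definition C1_fun :: "(pt \<Rightarrow> real) \<Rightarrow> bool" where
  "C1_fun f \<longleftrightarrow> (\<forall>p. f differentiable (at p)) \<and> (\<forall>v. continuous_on UNIV (pd f v))"

definition C2_fun :: "(pt \<Rightarrow> real) \<Rightarrow> bool" where
  "C2_fun f \<longleftrightarrow> C1_fun f \<and> (\<forall>v. C1_fun (pd f v))"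

text \<open>functions on T^2 x R, i.e. 2 pi-periodic in x and y\<close>
definition periodic_xy :: "(pt \<Rightarrow> 'b) \<Rightarrow> bool" where
  "periodic_xy F \<longleftrightarrow> (\<forall>x y t. F (x + 2*pi, y, t) = F (x, y, t) \<and> F (x, y + 2*pi, t) = F (x, y, t))"

definition wave_op :: "(pt \<Rightarrow> real^2^2) \<Rightarrow> (pt \<Rightarrow> real) \<Rightarrow> pt \<Rightarrow> real" where
  "wave_op A u p = pd (pd u et) et p +
     (\<Sum>i\<in>UNIV. \<Sum>j\<in>UNIV. pd (\<lambda>q. A q $ i $ j * pd u (sdir j) q) (sdir i) p)"

definition reg_class :: "real \<Rightarrow> real \<Rightarrow> (pt \<Rightarrow> real^2^2) \<Rightarrow> bool" where
  "reg_class \<Lambda> C A \<longleftrightarrow>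
     (\<forall>p (\<xi>::real^2). inverse \<Lambda> * norm \<xi> ^ 2 \<le> \<xi> \<bullet> (A p *v \<xi>) \<and> \<xi> \<bullet> (A p *v \<xi>) \<le> \<Lambda> * norm \<xi> ^ 2) \<and>
     (\<forall>i j. C1_fun (\<lambda>p. A p $ i $ j) \<and>
        (\<forall>p v. v \<in> {ex, ey, et} \<longrightarrow> \<bar>pd (\<lambda>q. A q $ i $ j) v p\<bar> \<le> C))"

definition diag_mat :: "real \<Rightarrow> real \<Rightarrow> real^2^2" where
  "diag_mat a b = (\<chi> i j. if i = j then (if i = 1 then a else b) else 0)"

text \<open>F 0, F 1, F 2 are f, f', f'' on [0,T], f'' continuous there (f is C^2 on [0,T])\<close>
definition C2_derivs :: "real \<Rightarrow> (nat \<Rightarrow> real \<Rightarrow> real) \<Rightarrow> bool" where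
  "C2_derivs T F \<longleftrightarrow>
     (\<forall>t\<in>{0..T}. (F 0 has_real_derivative F 1 t) (at t within {0..T}) \<and>
                 (F 1 has_real_derivative F 2 t) (at t within {0..T})) \<and>
     continuous_on {0..T} (F 2)"

end

theory Submission
  imports Defs
begin

(*
  Both solutions have the two-mode form u = F(t) cos(kx) + G(t) cos(k'y). Perturbing diag(a, b) by
  p1(t)/k cos cos and 2 p2(t)/k sin sin in the first row and by 2 p1(t)/k' sin sin and
  p2(t)/k' cos cos in the second, the cross terms of div(A grad u) cancel through sin^2 + cos^2 = 1
  and the equation reduces to the coupled system
    F'' = a k^2 F + k' p2 G,    G'' = b k'^2 G + k p1 F.
  For (i) take p2 = 0, F = exp(-k sqrt a t) and G = T^3 chi(t/T) exp(-k' sqrt b t) with T = eps^(1/3)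
  and chi a C^3 step from 0 to 1; the second equation then defines p1, which vanishes outside [0, T],
  is of size T/k and has derivative of size 1/k. Since k >= eps^(-1/4) is huge, the perturbed matrix
  stays in R(20, 10). Part (ii) exchanges the roles of the modes and uses the step 1 - chi.
*)

section \<open>Time profiles\<close>

lemma abs_mult_le_mult: "\<bar>x\<bar> \<le> X \<Longrightarrow> \<bar>y\<bar> \<le> Y \<Longrightarrow> \<bar>x * y\<bar> \<le> X * (Y :: real)"
  by (simp add: abs_mult mult_mono')

lemma exp_4_le: "exp (4 :: real) \<le> 81"
proof -
  have "exp (4 :: real) = exp 1 ^ 4"
    using exp_of_nat_mult[of 4 "1 :: real"] by simp
  also have "\<dots> \<le> 3 ^ 4"
    by (rule power_mono[OF exp_le]) simp
  finally show ?thesis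
    by simp
qed

definition trunc_pow :: "nat \<Rightarrow> real \<Rightarrow> real" where
  "trunc_pow n s = (max s 0) ^ n"

lemma trunc_pow_nonpos: "s \<le> 0 \<Longrightarrow> 1 \<le> n \<Longrightarrow> trunc_pow n s = 0"
  by (simp add: trunc_pow_def max_def)

lemma trunc_pow_nonneg: "0 \<le> s \<Longrightarrow> trunc_pow n s = s ^ n"
  by (simp add: trunc_pow_def)

lemma continuous_on_trunc_pow: "continuous_on UNIV (trunc_pow n)"
  unfolding trunc_pow_def by (intro continuous_intros)

lemma has_real_derivative_trunc_pow:
  assumes "2 \<le> n"
  shows "(trunc_pow n has_real_derivative real n * trunc_pow (n - 1) x) (at x)"
proof -
  consider "0 < x" | "x < 0" | "x = 0" by linarith
  then show ?thesis
  proof cases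
    case 1
    have "((\<lambda>s. s ^ n) has_real_derivative real n * trunc_pow (n - 1) x) (at x)"
      using DERIV_pow[of n x] 1 by (simp add: trunc_pow_def)
    then show ?thesis
      by (rule has_field_derivative_transform_within_open[where S = "{0<..}"])
        (use 1 in \<open>auto simp: trunc_pow_def\<close>)
  next
    case 2
    have "((\<lambda>s. 0) has_real_derivative real n * trunc_pow (n - 1) x) (at x)"
      using 2 assms by (simp add: trunc_pow_nonpos)
    then show ?thesis
      by (rule has_field_derivative_transform_within_open[where S = "{..<0}"])
        (use 2 assms in \<open>auto simp: trunc_pow_nonpos\<close>)
  next
    case 3
    have "trunc_pow n z - trunc_pow n x = trunc_pow (n - 1) z * (z - x)" for z
      using 3 assms by (cases "0 \<le> z") (auto simp: trunc_pow_def power_eq_if)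
    moreover have "isCont (trunc_pow (n - 1)) x"
      using continuous_on_trunc_pow by (simp add: continuous_on_eq_continuous_at)
    moreover have "trunc_pow (n - 1) x = real n * trunc_pow (n - 1) x"
      using 3 assms by (simp add: trunc_pow_nonpos)
    ultimately show ?thesis
      using CARAT_DERIV by metis
  qed
qed

lemma has_real_derivative_trunc_pow_chain [derivative_intros]:
  assumes "2 \<le> n" "(f has_real_derivative f') (at x)"
  shows "((\<lambda>s. trunc_pow n (f s)) has_real_derivative real n * trunc_pow (n - 1) (f x) * f') (at x)"
  using DERIV_chain2[OF has_real_derivative_trunc_pow[OF assms(1)] assms(2)] by simp

text \<open>On \<open>[0,1]\<close> the step is the polynomial \<open>35s\<^sup>4 - 84s\<^sup>5 + 70s\<^sup>6 - 20s\<^sup>7\<close>,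
  whose first three derivatives vanish at \<open>0\<close> and \<open>1\<close>; the terms in \<open>s - 1\<close> turn it
  into the constant \<open>1\<close> beyond \<open>1\<close>.\<close>

definition smooth_step :: "real \<Rightarrow> real" where
  "smooth_step s = 35 * trunc_pow 4 s - 84 * trunc_pow 5 s + 70 * trunc_pow 6 s - 20 * trunc_pow 7 s
     + 35 * trunc_pow 4 (s - 1) + 84 * trunc_pow 5 (s - 1) + 70 * trunc_pow 6 (s - 1) + 20 * trunc_pow 7 (s - 1)"

definition smooth_step1 :: "real \<Rightarrow> real" where
  "smooth_step1 s = 140 * trunc_pow 3 s - 420 * trunc_pow 4 s + 420 * trunc_pow 5 s - 140 * trunc_pow 6 s
     + 140 * trunc_pow 3 (s - 1) + 420 * trunc_pow 4 (s - 1) + 420 * trunc_pow 5 (s - 1) + 140 * trunc_pow 6 (s - 1)"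

definition smooth_step2 :: "real \<Rightarrow> real" where
  "smooth_step2 s = 420 * trunc_pow 2 s - 1680 * trunc_pow 3 s + 2100 * trunc_pow 4 s - 840 * trunc_pow 5 s
     + 420 * trunc_pow 2 (s - 1) + 1680 * trunc_pow 3 (s - 1) + 2100 * trunc_pow 4 (s - 1) + 840 * trunc_pow 5 (s - 1)"

definition smooth_step3 :: "real \<Rightarrow> real" where
  "smooth_step3 s = 840 * trunc_pow 1 s - 5040 * trunc_pow 2 s + 8400 * trunc_pow 3 s - 4200 * trunc_pow 4 s
     + 840 * trunc_pow 1 (s - 1) + 5040 * trunc_pow 2 (s - 1) + 8400 * trunc_pow 3 (s - 1) + 4200 * trunc_pow 4 (s - 1)"

lemma smooth_step_derivs:
  "(smooth_step has_real_derivative smooth_step1 s) (at s)"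
  "(smooth_step1 has_real_derivative smooth_step2 s) (at s)"
  "(smooth_step2 has_real_derivative smooth_step3 s) (at s)"
  unfolding smooth_step_def [abs_def] smooth_step1_def [abs_def] smooth_step2_def [abs_def] smooth_step3_def
  by (rule derivative_eq_intros refl | simp)+

lemma continuous_on_smooth_step3: "continuous_on UNIV smooth_step3"
  unfolding smooth_step3_def [abs_def] trunc_pow_def by (intro continuous_intros)

lemma smooth_step_nonpos:
  "s \<le> 0 \<Longrightarrow> smooth_step s = 0 \<and> smooth_step1 s = 0 \<and> smooth_step2 s = 0 \<and> smooth_step3 s = 0"
  by (simp add: smooth_step_def smooth_step1_def smooth_step2_def smooth_step3_def trunc_pow_nonpos)

lemma smooth_step_ge_1:
  assumes "1 \<le> s"
  shows "smooth_step s = 1 \<and> smooth_step1 s = 0 \<and> smooth_step2 s = 0 \<and> smooth_step3 s = 0"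
proof -
  obtain r where "0 \<le> r" "s = r + 1"
    using assms by (intro that[of "s - 1"]) auto
  then show ?thesis
    unfolding smooth_step_def smooth_step1_def smooth_step2_def smooth_step3_def
    by (simp add: trunc_pow_nonneg) (simp add: power_def numeral_eq_Suc algebra_simps)
qed

lemma smooth_step_bounded:
  assumes "0 \<le> s" "s \<le> 1"
  shows "\<bar>smooth_step s\<bar> \<le> 10000 \<and> \<bar>smooth_step1 s\<bar> \<le> 10000 \<and> \<bar>smooth_step2 s\<bar> \<le> 10000 \<and> \<bar>smooth_step3 s\<bar> \<le> 10000"
proof -
  have "trunc_pow n (s - 1) = 0" if "1 \<le> n" for n
    using assms that by (simp add: trunc_pow_nonpos)
  moreover have pow: "0 \<le> s ^ n \<and> s ^ n \<le> 1" for n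
    using assms by (simp add: power_le_one)
  ultimately show ?thesis
    unfolding smooth_step_def smooth_step1_def smooth_step2_def smooth_step3_def
    using assms apply (simp add: trunc_pow_nonneg abs_le_iff)
    using pow[of 1] pow[of 2] pow[of 3] pow[of 4] pow[of 5] pow[of 6] pow[of 7]
    by (intro conjI; linarith)
qed

definition C2_family :: "(nat \<Rightarrow> real \<Rightarrow> real) \<Rightarrow> bool" where
  "C2_family F \<longleftrightarrow>
     (\<forall>s. (F 0 has_real_derivative F 1 s) (at s) \<and> (F 1 has_real_derivative F 2 s) (at s)) \<and>
     continuous_on UNIV (F 2)"

lemma C2_family_imp_C2_derivs: "C2_family F \<Longrightarrow> C2_derivs T F"
  unfolding C2_family_def C2_derivs_def
  by (auto intro: has_field_derivative_at_within continuous_on_subset)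

lemma C2_familyD:
  assumes "C2_family F"
  shows "(F 0 has_real_derivative F 1 s) (at s)" "(F 1 has_real_derivative F 2 s) (at s)"
    "continuous_on UNIV (F 0)" "continuous_on UNIV (F 1)" "continuous_on UNIV (F 2)"
  using assms unfolding C2_family_def
  by (auto intro!: DERIV_isCont simp: continuous_on_eq_continuous_at)

definition exp_mode :: "real \<Rightarrow> nat \<Rightarrow> real \<Rightarrow> real" where
  "exp_mode l n t = (- l) ^ n * exp (- l * t)"

lemma C2_family_exp_mode: "C2_family (exp_mode l)"
  unfolding C2_family_def exp_mode_def
  by (auto intro!: derivative_eq_intros continuous_intros simp: power2_eq_square)

lemma abs_exp_mode_le:
  assumes "n \<le> 2" "0 \<le> l" "l \<le> 4 * K"
  shows "\<bar>exp_mode l n t\<bar> \<le> 16 * K ^ n * exp (- l * t)"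
proof -
  have "l ^ n \<le> (4 * K) ^ n"
    using assms by (intro power_mono) auto
  also have "\<dots> \<le> 16 * K ^ n"
    using assms by (auto simp: power_mult_distrib le_Suc_eq numeral_2_eq_2)
  finally show ?thesis
    by (simp add: exp_mode_def abs_mult power_abs \<open>0 \<le> l\<close>)
qed

lemma cube_root_power:
  assumes "0 < \<epsilon>" "n \<le> 3"
  shows "(\<epsilon> powr (1/3)) ^ (3 - n) = \<epsilon> powr ((3 - real n) / 3)"
  using assms by (simp add: powr_realpow[symmetric] powr_powr of_nat_diff)

lemma small_scales:
  fixes \<epsilon> K :: real
  assumes "0 < \<epsilon>" "\<epsilon> < 1/10^36" "\<epsilon> powr (-1/4) \<le> K" "K \<le> \<epsilon> powr (-1/3)"
  shows "\<epsilon> powr (1/3) \<le> 1/10^12" "10^9 \<le> K" "K * \<epsilon> powr (1/3) \<le> 1"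
proof -
  have "\<epsilon> powr (1/3) \<le> (1/10^36) powr (1/3)"
    using assms by (intro powr_mono2) auto
  also have "(1/10^36 :: real) powr (1/3) = ((1/10^12) powr 3) powr (1/3)"
    by (simp add: power_divide)
  also have "\<dots> = 1/10^12"
    by (simp only: powr_powr) simp
  finally show "\<epsilon> powr (1/3) \<le> 1/10^12" .
  have "(1/10^36 :: real) powr (-1/4) \<le> \<epsilon> powr (-1/4)"
    using assms by (intro powr_mono2') auto
  moreover have "(1/10^36 :: real) powr (-1/4) = ((1/10^9) powr 4) powr (-1/4)"
    by (simp add: power_divide)
  moreover have "\<dots> = 10^9"
    by (simp only: powr_powr) (simp add: powr_minus_divide)
  ultimately show "10^9 \<le> K"
    using assms by simp
  have "K * \<epsilon> powr (1/3) \<le> \<epsilon> powr (-1/3) * \<epsilon> powr (1/3)"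
    using assms by (intro mult_right_mono) auto
  also have "\<dots> = 1"
    using assms by (simp add: powr_add[symmetric])
  finally show "K * \<epsilon> powr (1/3) \<le> 1" .
qed

lemma decay_rate_bounds:
  assumes "0 < a" "a < 10" "0 \<le> K" "0 \<le> T" "K * T \<le> 1"
  shows "0 \<le> K * sqrt a" "K * sqrt a \<le> 4 * K" "K * sqrt a * T \<le> 4"
proof -
  have "sqrt a \<le> 4"
    using assms real_sqrt_le_mono[of a 16] by simp
  then show "0 \<le> K * sqrt a" "K * sqrt a \<le> 4 * K" "K * sqrt a * T \<le> 4"
    using assms mult_mono[of "sqrt a" 4 "K * T" 1] mult_left_mono[of "sqrt a" 4 K]
    by (auto simp: mult.commute mult.left_commute)
qed

locale transition_profile =
  fixes h0 h1 h2 h3 :: "real \<Rightarrow> real" and T \<mu> \<nu> \<kappa> :: real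
  assumes h0_deriv: "(h0 has_real_derivative h1 s) (at s)"
    and h1_deriv: "(h1 has_real_derivative h2 s) (at s)"
    and h2_deriv: "(h2 has_real_derivative h3 s) (at s)"
    and continuous_h3: "continuous_on UNIV h3"
    and h_bounded: "0 \<le> s \<Longrightarrow> s \<le> 1 \<Longrightarrow>
      \<bar>h0 s\<bar> \<le> 20000 \<and> \<bar>h1 s\<bar> \<le> 20000 \<and> \<bar>h2 s\<bar> \<le> 20000 \<and> \<bar>h3 s\<bar> \<le> 20000"
    and h_flat: "s \<le> 0 \<or> 1 \<le> s \<Longrightarrow> h1 s = 0 \<and> h2 s = 0 \<and> h3 s = 0"
    and T_pos: "0 < T"
    and \<mu>: "0 \<le> \<mu>" "\<mu> * T \<le> 4"
    and \<nu>: "0 \<le> \<nu>" "\<nu> * T \<le> 4"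
    and \<kappa>_pos: "0 < \<kappa>"
begin

text \<open>\<open>profile n\<close> is the \<open>n\<close>-th derivative of \<open>T\<^sup>3 e\<^sup>-\<^sup>\<mu>\<^sup>t h0 (t/T)\<close>, and the coupling is
  \<open>(profile 2 - \<mu>\<^sup>2 profile 0) / (\<kappa> e\<^sup>-\<^sup>\<nu>\<^sup>t)\<close>.\<close>

definition jet :: "nat \<Rightarrow> real \<Rightarrow> real" where
  "jet n s =
     (if n = 0 then h0 s
      else if n = 1 then h1 s - \<mu> * T * h0 s
      else h2 s - 2 * \<mu> * T * h1 s + (\<mu> * T)\<^sup>2 * h0 s)"

definition profile :: "nat \<Rightarrow> real \<Rightarrow> real" where
  "profile n t = T ^ (3 - n) * exp (- \<mu> * t) * jet n (t / T)"

definition coupling :: "real \<Rightarrow> real" where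
  "coupling t = T / \<kappa> * exp ((\<nu> - \<mu>) * t) * (h2 (t / T) - 2 * \<mu> * T * h1 (t / T))"

definition coupling' :: "real \<Rightarrow> real" where
  "coupling' t = exp ((\<nu> - \<mu>) * t) / \<kappa> *
     ((\<nu> - \<mu>) * T * (h2 (t / T) - 2 * \<mu> * T * h1 (t / T)) + (h3 (t / T) - 2 * \<mu> * T * h2 (t / T)))"

lemma h_chain [derivative_intros]:
  "(f has_real_derivative f') (at t) \<Longrightarrow> ((\<lambda>t. h0 (f t)) has_real_derivative h1 (f t) * f') (at t)"
  "(f has_real_derivative f') (at t) \<Longrightarrow> ((\<lambda>t. h1 (f t)) has_real_derivative h2 (f t) * f') (at t)"
  "(f has_real_derivative f') (at t) \<Longrightarrow> ((\<lambda>t. h2 (f t)) has_real_derivative h3 (f t) * f') (at t)"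
  by (rule DERIV_chain2[OF h0_deriv] DERIV_chain2[OF h1_deriv] DERIV_chain2[OF h2_deriv]; assumption)+

lemma continuous_on_h: "continuous_on UNIV h0" "continuous_on UNIV h1" "continuous_on UNIV h2"
  using h0_deriv h1_deriv h2_deriv by (auto intro!: DERIV_isCont simp: continuous_on_eq_continuous_at)

lemma continuous_on_rescaled: "continuous_on UNIV h \<Longrightarrow> continuous_on UNIV (\<lambda>t. h (t / T))"
  by (rule continuous_on_compose2[of UNIV h]) (use T_pos in \<open>auto intro!: continuous_intros\<close>)

lemma profile_eqs:
  "profile 0 = (\<lambda>t. T ^ 3 * exp (- \<mu> * t) * h0 (t / T))"
  "profile 1 = (\<lambda>t. T\<^sup>2 * exp (- \<mu> * t) * (h1 (t / T) - \<mu> * T * h0 (t / T)))"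
  "profile 2 = (\<lambda>t. T * exp (- \<mu> * t) * (h2 (t / T) - 2 * \<mu> * T * h1 (t / T) + (\<mu> * T)\<^sup>2 * h0 (t / T)))"
  by (simp_all add: fun_eq_iff profile_def jet_def)

lemma C2_family_profile: "C2_family profile"
proof -
  have "(profile 0 has_real_derivative profile 1 t) (at t)" "(profile 1 has_real_derivative profile 2 t) (at t)" for t
    unfolding profile_eqs using T_pos
    by (auto intro!: derivative_eq_intros simp: field_simps power2_eq_square power3_eq_cube)
  moreover have "continuous_on UNIV (profile 2)"
    unfolding profile_eqs by (auto intro!: continuous_intros continuous_on_rescaled continuous_on_h)
  ultimately show ?thesis
    unfolding C2_family_def by blast
qed

lemma coupling_deriv: "(coupling has_real_derivative coupling' t) (at t)"
  unfolding coupling_def [abs_def] coupling'_def using T_pos \<kappa>_pos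
  by (auto intro!: derivative_eq_intros simp: field_simps power2_eq_square)

lemma continuous_on_coupling': "continuous_on UNIV coupling'"
  unfolding coupling'_def [abs_def] using \<kappa>_pos
  by (auto intro!: continuous_intros continuous_on_rescaled continuous_on_h continuous_h3)

lemma profile_ode: "profile 2 t = \<mu>\<^sup>2 * profile 0 t + \<kappa> * exp (- \<nu> * t) * coupling t"
proof -
  have "\<kappa> * exp (- \<nu> * t) * coupling t = T * exp (- \<mu> * t) * (h2 (t / T) - 2 * \<mu> * T * h1 (t / T))"
    using \<kappa>_pos by (simp add: coupling_def exp_add [symmetric] algebra_simps)
  then show ?thesis
    by (simp add: profile_eqs algebra_simps power2_eq_square power3_eq_cube)
qed

lemma coupling_outside: "t \<le> 0 \<or> T \<le> t \<Longrightarrow> coupling t = 0 \<and> coupling' t = 0"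
  using h_flat[of "t / T"] T_pos by (auto simp: coupling_def coupling'_def field_simps)

lemma abs_jet_le:
  assumes "0 \<le> s" "s \<le> 1"
  shows "\<bar>jet n s\<bar> \<le> 500000"
proof -
  have h: "\<bar>h0 s\<bar> \<le> 20000" "\<bar>h1 s\<bar> \<le> 20000" "\<bar>h2 s\<bar> \<le> 20000"
    using h_bounded[OF assms] by auto
  have \<mu>T: "\<bar>\<mu> * T\<bar> \<le> 4" "(\<mu> * T)\<^sup>2 \<le> 16"
    using \<mu> T_pos power_mono[of "\<mu> * T" 4 2] by auto
  have "\<bar>\<mu> * T * h0 s\<bar> \<le> 4 * 20000" "\<bar>2 * \<mu> * T * h1 s\<bar> \<le> 8 * 20000" "\<bar>(\<mu> * T)\<^sup>2 * h0 s\<bar> \<le> 16 * 20000"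
    by (intro abs_mult_le_mult; use h \<mu>T in simp)+
  note triangle = this h abs_triangle_ineq4[of "h1 s" "\<mu> * T * h0 s"]
    abs_triangle_ineq4[of "h2 s" "2 * \<mu> * T * h1 s"]
    abs_triangle_ineq[of "h2 s - 2 * \<mu> * T * h1 s" "(\<mu> * T)\<^sup>2 * h0 s"]
  have "\<bar>h0 s\<bar> \<le> 500000" "\<bar>h1 s - \<mu> * T * h0 s\<bar> \<le> 500000"
    "\<bar>h2 s - 2 * \<mu> * T * h1 s + (\<mu> * T)\<^sup>2 * h0 s\<bar> \<le> 500000"
    by (use triangle in linarith)+
  then show ?thesis
    by (simp add: jet_def)
qed

lemma abs_profile_le:
  assumes "0 \<le> t" "t \<le> T"
  shows "\<bar>profile n t\<bar> \<le> 500000 * T ^ (3 - n) * exp (- \<mu> * t)"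
proof -
  have "\<bar>jet n (t / T)\<bar> \<le> 500000"
    using assms T_pos by (intro abs_jet_le) auto
  then show ?thesis
    using T_pos by (simp add: profile_def abs_mult mult_left_mono mult.commute)
qed

lemma coupling_factors_bounded:
  assumes "0 \<le> t" "t \<le> T"
  shows "exp ((\<nu> - \<mu>) * t) \<le> 81"
    and "\<bar>h2 (t / T) - 2 * \<mu> * T * h1 (t / T)\<bar> \<le> 180000"
    and "\<bar>(\<nu> - \<mu>) * T * (h2 (t / T) - 2 * \<mu> * T * h1 (t / T)) + (h3 (t / T) - 2 * \<mu> * T * h2 (t / T))\<bar>
      \<le> 900000"
proof -
  have "0 \<le> \<mu> * t" "\<nu> * t \<le> \<nu> * T"
    using assms \<mu> \<nu> by (simp_all add: mult_left_mono)
  then have "(\<nu> - \<mu>) * t \<le> 4"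
    using \<nu> by (simp add: algebra_simps)
  then show "exp ((\<nu> - \<mu>) * t) \<le> 81"
    using exp_4_le by (meson exp_le_cancel_iff order_trans)
  have h: "\<bar>h1 (t / T)\<bar> \<le> 20000" "\<bar>h2 (t / T)\<bar> \<le> 20000" "\<bar>h3 (t / T)\<bar> \<le> 20000"
    using h_bounded[of "t / T"] assms T_pos by auto
  have "0 \<le> \<mu> * T" "0 \<le> \<nu> * T"
    using \<mu> \<nu> T_pos by simp_all
  then have \<mu>T: "\<bar>\<mu> * T\<bar> \<le> 4" "\<bar>(\<nu> - \<mu>) * T\<bar> \<le> 4"
    using \<mu> \<nu> by (auto simp: abs_le_iff algebra_simps)
  have "\<bar>2 * \<mu> * T * h1 (t / T)\<bar> \<le> 8 * 20000" "\<bar>2 * \<mu> * T * h2 (t / T)\<bar> \<le> 8 * 20000"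
    by (intro abs_mult_le_mult; use h \<mu>T in simp)+
  note triangle = this h abs_triangle_ineq4[of "h2 (t / T)" "2 * \<mu> * T * h1 (t / T)"]
    abs_triangle_ineq4[of "h3 (t / T)" "2 * \<mu> * T * h2 (t / T)"]
  show y1: "\<bar>h2 (t / T) - 2 * \<mu> * T * h1 (t / T)\<bar> \<le> 180000"
    by (use triangle in linarith)
  have "\<bar>h3 (t / T) - 2 * \<mu> * T * h2 (t / T)\<bar> \<le> 180000"
    by (use triangle in linarith)
  moreover have "\<bar>(\<nu> - \<mu>) * T * (h2 (t / T) - 2 * \<mu> * T * h1 (t / T))\<bar> \<le> 4 * 180000"
    using \<mu>T(2) y1 by (rule abs_mult_le_mult)
  ultimately show "\<bar>(\<nu> - \<mu>) * T * (h2 (t / T) - 2 * \<mu> * T * h1 (t / T))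
      + (h3 (t / T) - 2 * \<mu> * T * h2 (t / T))\<bar> \<le> 900000"
    using abs_triangle_ineq[of "(\<nu> - \<mu>) * T * (h2 (t / T) - 2 * \<mu> * T * h1 (t / T))"
        "h3 (t / T) - 2 * \<mu> * T * h2 (t / T)"] by linarith
qed

lemma abs_coupling_le: "\<bar>coupling t\<bar> \<le> 10^8 * T / \<kappa>" "\<bar>coupling' t\<bar> \<le> 10^8 / \<kappa>"
proof -
  have "\<bar>coupling t\<bar> \<le> T / \<kappa> * (81 * 180000) \<and> \<bar>coupling' t\<bar> \<le> 1 / \<kappa> * (81 * 900000)"
  proof (cases "0 \<le> t \<and> t \<le> T")
    case False
    then show ?thesis
      using coupling_outside[of t] T_pos \<kappa>_pos by auto
  next
    case True
    note bounds = coupling_factors_bounded[OF conjunct1[OF True] conjunct2[OF True]]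
    have "\<bar>coupling t\<bar> = T / \<kappa> * (exp ((\<nu> - \<mu>) * t) * \<bar>h2 (t / T) - 2 * \<mu> * T * h1 (t / T)\<bar>)"
      using T_pos \<kappa>_pos by (simp add: coupling_def abs_mult)
    also have "\<dots> \<le> T / \<kappa> * (81 * 180000)"
      using T_pos \<kappa>_pos bounds by (intro mult_left_mono mult_mono) auto
    finally have "\<bar>coupling t\<bar> \<le> T / \<kappa> * (81 * 180000)" .
    moreover have "\<bar>coupling' t\<bar> = 1 / \<kappa> * (exp ((\<nu> - \<mu>) * t) *
        \<bar>(\<nu> - \<mu>) * T * (h2 (t / T) - 2 * \<mu> * T * h1 (t / T)) + (h3 (t / T) - 2 * \<mu> * T * h2 (t / T))\<bar>)"
      using \<kappa>_pos by (simp add: coupling'_def abs_mult)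
    moreover have "\<dots> \<le> 1 / \<kappa> * (81 * 900000)"
      using \<kappa>_pos bounds by (intro mult_left_mono mult_mono) auto
    ultimately show ?thesis
      by linarith
  qed
  then show "\<bar>coupling t\<bar> \<le> 10^8 * T / \<kappa>" "\<bar>coupling' t\<bar> \<le> 10^8 / \<kappa>"
    using T_pos \<kappa>_pos by (auto simp: field_simps)
qed

lemma abs_coupling_small:
  assumes "T \<le> 1/10^12" "10^9 \<le> \<kappa>" "1 \<le> K"
  shows "\<bar>coupling t\<bar> \<le> 1/100" "\<bar>coupling' t\<bar> \<le> K"
proof -
  have "\<bar>coupling t\<bar> \<le> 10^8 * T / \<kappa>"
    by (rule abs_coupling_le)
  also have "\<dots> \<le> 10^8 * T"
    using assms T_pos by (simp add: divide_le_eq)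
  also have "\<dots> \<le> 1/100"
    using assms by simp
  finally show "\<bar>coupling t\<bar> \<le> 1/100" .
  have "\<bar>coupling' t\<bar> \<le> 10^8 / \<kappa>"
    by (rule abs_coupling_le)
  also have "\<dots> \<le> K"
    using assms mult_mono[of 1 K "10^9" \<kappa>] by (simp add: divide_le_eq)
  finally show "\<bar>coupling' t\<bar> \<le> K" .
qed

lemma abs_profile_le_scaled:
  assumes "n \<le> 2" "t \<in> {0..T}" "1 \<le> K" "T = \<epsilon> powr (1/3)" "0 < \<epsilon>"
  shows "\<bar>profile n t\<bar> \<le> 500000 * K ^ n * \<epsilon> powr ((3 - real n) / 3) * exp (- \<mu> * t)"
proof -
  have "\<bar>profile n t\<bar> \<le> 1 * (500000 * T ^ (3 - n) * exp (- \<mu> * t))"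
    using abs_profile_le[of t n] assms by simp
  also have "\<dots> \<le> K ^ n * (500000 * T ^ (3 - n) * exp (- \<mu> * t))"
    using assms T_pos by (intro mult_right_mono one_le_power) auto
  finally show ?thesis
    using assms by (simp add: cube_root_power mult_ac)
qed

end

lemma transition_profile_smooth_step:
  assumes "0 < T" "0 \<le> \<mu>" "\<mu> * T \<le> 4" "0 \<le> \<nu>" "\<nu> * T \<le> 4" "0 < \<kappa>"
  shows "transition_profile smooth_step smooth_step1 smooth_step2 smooth_step3 T \<mu> \<nu> \<kappa>"
proof
  show "\<bar>smooth_step s\<bar> \<le> 20000 \<and> \<bar>smooth_step1 s\<bar> \<le> 20000 \<and> \<bar>smooth_step2 s\<bar> \<le> 20000 \<and> \<bar>smooth_step3 s\<bar> \<le> 20000"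
    if "0 \<le> s" "s \<le> 1" for s
    using smooth_step_bounded[OF that] by linarith
  show "smooth_step1 s = 0 \<and> smooth_step2 s = 0 \<and> smooth_step3 s = 0" if "s \<le> 0 \<or> 1 \<le> s" for s
    using smooth_step_nonpos[of s] smooth_step_ge_1[of s] that by auto
qed (use assms smooth_step_derivs continuous_on_smooth_step3 in auto)

lemma transition_profile_smooth_step_down:
  assumes "0 < T" "0 \<le> \<mu>" "\<mu> * T \<le> 4" "0 \<le> \<nu>" "\<nu> * T \<le> 4" "0 < \<kappa>"
  shows "transition_profile (\<lambda>s. 1 - smooth_step s) (\<lambda>s. - smooth_step1 s) (\<lambda>s. - smooth_step2 s)
    (\<lambda>s. - smooth_step3 s) T \<mu> \<nu> \<kappa>"
proof
  show "\<bar>1 - smooth_step s\<bar> \<le> 20000 \<and> \<bar>- smooth_step1 s\<bar> \<le> 20000 \<and> \<bar>- smooth_step2 s\<bar> \<le> 20000 \<and>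
      \<bar>- smooth_step3 s\<bar> \<le> 20000" if "0 \<le> s" "s \<le> 1" for s
    using smooth_step_bounded[OF that] by (simp add: abs_le_iff)
  show "- smooth_step1 s = 0 \<and> - smooth_step2 s = 0 \<and> - smooth_step3 s = 0" if "s \<le> 0 \<or> 1 \<le> s" for s
    using smooth_step_nonpos[of s] smooth_step_ge_1[of s] that by auto
qed (use assms smooth_step_derivs continuous_on_smooth_step3 in \<open>auto intro!: derivative_eq_intros continuous_intros\<close>)

section \<open>Gradients of functions of \<open>(x, y, t)\<close>\<close>

definition has_grad :: "(pt \<Rightarrow> real) \<Rightarrow> (pt \<Rightarrow> real) \<Rightarrow> (pt \<Rightarrow> real) \<Rightarrow> (pt \<Rightarrow> real) \<Rightarrow> bool" where
  "has_grad f fx fy ft \<longleftrightarrow>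
     (\<forall>p. (f has_derivative (\<lambda>v. fx p * fst v + fy p * fst (snd v) + ft p * snd (snd v))) (at p))"

lemma has_grad_eq_rhs: "has_grad f fx fy ft \<Longrightarrow> fx = gx \<Longrightarrow> fy = gy \<Longrightarrow> ft = gt \<Longrightarrow> has_grad f gx gy gt"
  by simp

lemma has_grad_const: "has_grad (\<lambda>p. c) (\<lambda>p. 0) (\<lambda>p. 0) (\<lambda>p. 0)"
  unfolding has_grad_def by (auto intro: has_derivative_eq_rhs[OF has_derivative_const])

lemma has_grad_add:
  assumes "has_grad f fx fy ft" "has_grad g gx gy gt"
  shows "has_grad (\<lambda>p. f p + g p) (\<lambda>p. fx p + gx p) (\<lambda>p. fy p + gy p) (\<lambda>p. ft p + gt p)"
  unfolding has_grad_def
proof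
  fix p
  from assms have "((\<lambda>p. f p + g p) has_derivative (\<lambda>v. (fx p * fst v + fy p * fst (snd v) + ft p * snd (snd v))
     + (gx p * fst v + gy p * fst (snd v) + gt p * snd (snd v)))) (at p)"
    by (intro has_derivative_add) (use assms in \<open>simp_all only: has_grad_def\<close>)
  then show "((\<lambda>p. f p + g p) has_derivative
      (\<lambda>v. (fx p + gx p) * fst v + (fy p + gy p) * fst (snd v) + (ft p + gt p) * snd (snd v))) (at p)"
    by (rule has_derivative_eq_rhs) (simp add: fun_eq_iff algebra_simps)
qed

lemma has_grad_mult:
  assumes "has_grad f fx fy ft" "has_grad g gx gy gt"
  shows "has_grad (\<lambda>p. f p * g p)
    (\<lambda>p. fx p * g p + f p * gx p) (\<lambda>p. fy p * g p + f p * gy p) (\<lambda>p. ft p * g p + f p * gt p)"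
  unfolding has_grad_def
proof
  fix p
  from assms have "((\<lambda>p. f p * g p) has_derivative (\<lambda>v. f p * (gx p * fst v + gy p * fst (snd v) + gt p * snd (snd v))
     + (fx p * fst v + fy p * fst (snd v) + ft p * snd (snd v)) * g p)) (at p)"
    by (intro has_derivative_mult) (use assms in \<open>simp_all only: has_grad_def\<close>)
  then show "((\<lambda>p. f p * g p) has_derivative (\<lambda>v. (fx p * g p + f p * gx p) * fst v
      + (fy p * g p + f p * gy p) * fst (snd v) + (ft p * g p + f p * gt p) * snd (snd v))) (at p)"
    by (rule has_derivative_eq_rhs) (simp add: fun_eq_iff algebra_simps)
qed

lemma has_grad_divide_const:
  "has_grad f fx fy ft \<Longrightarrow> has_grad (\<lambda>p. f p / c) (\<lambda>p. fx p / c) (\<lambda>p. fy p / c) (\<lambda>p. ft p / c)"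
  using has_grad_mult[OF _ has_grad_const, of f fx fy ft "1 / c"] by simp

lemma has_grad_coordinate:
  assumes "\<And>s. (X has_real_derivative X' s) (at s)"
  shows "has_grad (\<lambda>p. X (fst p)) (\<lambda>p. X' (fst p)) (\<lambda>p. 0) (\<lambda>p. 0)"
    and "has_grad (\<lambda>p. X (fst (snd p))) (\<lambda>p. 0) (\<lambda>p. X' (fst (snd p))) (\<lambda>p. 0)"
    and "has_grad (\<lambda>p. X (snd (snd p))) (\<lambda>p. 0) (\<lambda>p. 0) (\<lambda>p. X' (snd (snd p)))"
proof -
  have chain: "((\<lambda>p. X (\<pi> p)) has_derivative (\<lambda>v. X' (\<pi> p) * \<pi> v)) (at p)"
    if "bounded_linear \<pi>" for \<pi> :: "pt \<Rightarrow> real" and p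
    using has_derivative_compose[OF bounded_linear_imp_has_derivative[OF that], of X "(*) (X' (\<pi> p))"]
      assms[of "\<pi> p", unfolded has_field_derivative_def]
    by (simp add: mult.commute)
  have "bounded_linear (\<lambda>p :: pt. fst p)" "bounded_linear (\<lambda>p :: pt. fst (snd p))"
    "bounded_linear (\<lambda>p :: pt. snd (snd p))"
    by (auto intro!: bounded_linear_intros)
  from chain[OF this(1)] chain[OF this(2)] chain[OF this(3)] show
    "has_grad (\<lambda>p. X (fst p)) (\<lambda>p. X' (fst p)) (\<lambda>p. 0) (\<lambda>p. 0)"
    "has_grad (\<lambda>p. X (fst (snd p))) (\<lambda>p. 0) (\<lambda>p. X' (fst (snd p))) (\<lambda>p. 0)"
    "has_grad (\<lambda>p. X (snd (snd p))) (\<lambda>p. 0) (\<lambda>p. 0) (\<lambda>p. X' (snd (snd p)))"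
    unfolding has_grad_def by auto
qed

lemma pd_has_grad:
  assumes "has_grad f fx fy ft"
  shows "pd f v p = fx p * fst v + fy p * fst (snd v) + ft p * snd (snd v)"
proof -
  have "(f has_derivative (\<lambda>v. fx p * fst v + fy p * fst (snd v) + ft p * snd (snd v))) (at p)"
    using assms unfolding has_grad_def by blast
  then show ?thesis
    by (simp add: pd_def frechet_derivative_at[symmetric])
qed

lemma pd_has_grad_directions:
  assumes "has_grad f fx fy ft"
  shows "pd f ex = fx" "pd f ey = fy" "pd f et = ft"
  by (auto simp: pd_has_grad[OF assms] ex_def ey_def et_def)

lemma continuous_on_has_grad: "has_grad f fx fy ft \<Longrightarrow> continuous_on UNIV f"
  unfolding has_grad_def by (meson continuous_at_imp_continuous_on has_derivative_continuous)

lemma C1_fun_has_grad: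
  assumes "has_grad f fx fy ft" "continuous_on UNIV fx" "continuous_on UNIV fy" "continuous_on UNIV ft"
  shows "C1_fun f"
  unfolding C1_fun_def
proof
  show "\<forall>p. f differentiable at p"
    using assms(1) unfolding has_grad_def differentiable_def by blast
  show "\<forall>v. continuous_on UNIV (pd f v)"
    using assms(2-4) by (auto simp: pd_has_grad[OF assms(1)] intro!: continuous_intros)
qed

lemma C2_fun_has_grad:
  assumes f: "has_grad f fx fy ft"
    and "has_grad fx fxx fxy fxt" "has_grad fy fyx fyy fyt" "has_grad ft ftx fty ftt"
    and "continuous_on UNIV fxx" "continuous_on UNIV fxy" "continuous_on UNIV fxt"
      "continuous_on UNIV fyx" "continuous_on UNIV fyy" "continuous_on UNIV fyt"
      "continuous_on UNIV ftx" "continuous_on UNIV fty" "continuous_on UNIV ftt"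
  shows "C2_fun f"
  unfolding C2_fun_def
proof
  have cont: "continuous_on UNIV fx" "continuous_on UNIV fy" "continuous_on UNIV ft"
    using assms(2-4) by (auto intro: continuous_on_has_grad)
  then show "C1_fun f"
    by (rule C1_fun_has_grad[OF f])
  show "\<forall>v. C1_fun (pd f v)"
  proof
    fix v :: pt
    have "has_grad (\<lambda>p. fx p * fst v + fy p * fst (snd v) + ft p * snd (snd v))
       (\<lambda>p. (fxx p * fst v + fx p * 0) + (fyx p * fst (snd v) + fy p * 0) + (ftx p * snd (snd v) + ft p * 0))
       (\<lambda>p. (fxy p * fst v + fx p * 0) + (fyy p * fst (snd v) + fy p * 0) + (fty p * snd (snd v) + ft p * 0))
       (\<lambda>p. (fxt p * fst v + fx p * 0) + (fyt p * fst (snd v) + fy p * 0) + (ftt p * snd (snd v) + ft p * 0))"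
      using assms(2-4) by (intro has_grad_add has_grad_mult has_grad_const)
    then show "C1_fun (pd f v)"
      unfolding pd_has_grad[OF f, abs_def]
      by (rule C1_fun_has_grad) (use assms(5-) cont in \<open>auto intro!: continuous_intros\<close>)
  qed
qed

section \<open>The two-mode ansatz\<close>

definition xcos :: "real \<Rightarrow> pt \<Rightarrow> real" where "xcos k p = cos (k * fst p)"
definition xsin :: "real \<Rightarrow> pt \<Rightarrow> real" where "xsin k p = sin (k * fst p)"
definition ycos :: "real \<Rightarrow> pt \<Rightarrow> real" where "ycos k p = cos (k * fst (snd p))"
definition ysin :: "real \<Rightarrow> pt \<Rightarrow> real" where "ysin k p = sin (k * fst (snd p))"
definition tcoord :: "pt \<Rightarrow> real" where "tcoord p = snd (snd p)"

lemma has_grad_trig: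
  "has_grad (xcos k) (\<lambda>p. - k * xsin k p) (\<lambda>p. 0) (\<lambda>p. 0)"
  "has_grad (xsin k) (\<lambda>p. k * xcos k p) (\<lambda>p. 0) (\<lambda>p. 0)"
  "has_grad (ycos k) (\<lambda>p. 0) (\<lambda>p. - k * ysin k p) (\<lambda>p. 0)"
  "has_grad (ysin k) (\<lambda>p. 0) (\<lambda>p. k * ycos k p) (\<lambda>p. 0)"
proof -
  have "((\<lambda>s. cos (k * s)) has_real_derivative - k * sin (k * s)) (at s)"
    "((\<lambda>s. sin (k * s)) has_real_derivative k * cos (k * s)) (at s)" for s
    by (auto intro!: derivative_eq_intros)
  from has_grad_coordinate[OF this(1)] has_grad_coordinate[OF this(2)] show
    "has_grad (xcos k) (\<lambda>p. - k * xsin k p) (\<lambda>p. 0) (\<lambda>p. 0)"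
    "has_grad (xsin k) (\<lambda>p. k * xcos k p) (\<lambda>p. 0) (\<lambda>p. 0)"
    "has_grad (ycos k) (\<lambda>p. 0) (\<lambda>p. - k * ysin k p) (\<lambda>p. 0)"
    "has_grad (ysin k) (\<lambda>p. 0) (\<lambda>p. k * ycos k p) (\<lambda>p. 0)"
    by (simp_all add: xcos_def [abs_def] xsin_def [abs_def] ycos_def [abs_def] ysin_def [abs_def])
qed

lemma has_grad_time:
  "(\<And>s. (X has_real_derivative X' s) (at s)) \<Longrightarrow> has_grad (\<lambda>p. X (tcoord p)) (\<lambda>p. 0) (\<lambda>p. 0) (\<lambda>p. X' (tcoord p))"
  unfolding tcoord_def by (rule has_grad_coordinate(3))

lemma continuous_on_trig:
  "continuous_on UNIV (xcos k)" "continuous_on UNIV (xsin k)"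
  "continuous_on UNIV (ycos k)" "continuous_on UNIV (ysin k)"
  by (rule continuous_on_has_grad, rule has_grad_trig)+

lemma continuous_on_time: "continuous_on UNIV X \<Longrightarrow> continuous_on UNIV (\<lambda>p. X (tcoord p))"
  unfolding tcoord_def by (rule continuous_on_compose2[of UNIV X]) (auto intro!: continuous_intros)

lemma abs_trig_le_1: "\<bar>xcos k p\<bar> \<le> 1" "\<bar>xsin k p\<bar> \<le> 1" "\<bar>ycos k p\<bar> \<le> 1" "\<bar>ysin k p\<bar> \<le> 1"
  by (simp_all add: xcos_def xsin_def ycos_def ysin_def)

lemma periodic_trig:
  "cos (real n * (x + 2 * pi)) = cos (real n * x)" "sin (real n * (x + 2 * pi)) = sin (real n * x)"
proof -
  have "cos (real n * (2 * pi)) = 1" "sin (real n * (2 * pi)) = 0"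
    using cos_int_2pin[of "int n"] sin_int_2pin[of "int n"] by (simp_all add: mult.commute)
  then show "cos (real n * (x + 2 * pi)) = cos (real n * x)" "sin (real n * (x + 2 * pi)) = sin (real n * x)"
    by (simp_all add: distrib_left cos_add sin_add)
qed

definition mode_sum :: "real \<Rightarrow> real \<Rightarrow> (real \<Rightarrow> real) \<Rightarrow> (real \<Rightarrow> real) \<Rightarrow> pt \<Rightarrow> real" where
  "mode_sum k k' F G p = F (tcoord p) * xcos k p + G (tcoord p) * ycos k' p"

definition entry11 :: "real \<Rightarrow> real \<Rightarrow> real \<Rightarrow> (real \<Rightarrow> real) \<Rightarrow> pt \<Rightarrow> real" where
  "entry11 k k' a p1 p = a + p1 (tcoord p) / k * xcos k p * ycos k' p"
definition entry12 :: "real \<Rightarrow> real \<Rightarrow> (real \<Rightarrow> real) \<Rightarrow> pt \<Rightarrow> real" where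
  "entry12 k k' p2 p = 2 * p2 (tcoord p) / k * xsin k p * ysin k' p"
definition entry21 :: "real \<Rightarrow> real \<Rightarrow> (real \<Rightarrow> real) \<Rightarrow> pt \<Rightarrow> real" where
  "entry21 k k' p1 p = 2 * p1 (tcoord p) / k' * xsin k p * ysin k' p"
definition entry22 :: "real \<Rightarrow> real \<Rightarrow> real \<Rightarrow> (real \<Rightarrow> real) \<Rightarrow> pt \<Rightarrow> real" where
  "entry22 k k' b p2 p = b + p2 (tcoord p) / k' * xcos k p * ycos k' p"

definition coupled_matrix ::
    "real \<Rightarrow> real \<Rightarrow> real \<Rightarrow> real \<Rightarrow> (real \<Rightarrow> real) \<Rightarrow> (real \<Rightarrow> real) \<Rightarrow> pt \<Rightarrow> real^2^2" where
  "coupled_matrix k k' a b p1 p2 p =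
     (\<chi> i j. if i = 1 then (if j = 1 then entry11 k k' a p1 p else entry12 k k' p2 p)
            else (if j = 1 then entry21 k k' p1 p else entry22 k k' b p2 p))"

lemma coupled_matrix_entries:
  "coupled_matrix k k' a b p1 p2 p $ 1 $ 1 = entry11 k k' a p1 p"
  "coupled_matrix k k' a b p1 p2 p $ 1 $ 2 = entry12 k k' p2 p"
  "coupled_matrix k k' a b p1 p2 p $ 2 $ 1 = entry21 k k' p1 p"
  "coupled_matrix k k' a b p1 p2 p $ 2 $ 2 = entry22 k k' b p2 p"
  by (simp_all add: coupled_matrix_def)

lemma coupled_matrix_eq_diag:
  "p1 (tcoord p) = 0 \<Longrightarrow> p2 (tcoord p) = 0 \<Longrightarrow> coupled_matrix k k' a b p1 p2 p = diag_mat a b"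
  by (simp add: coupled_matrix_def diag_mat_def entry11_def entry12_def entry21_def entry22_def
      vec_eq_iff forall_2)

lemma periodic_xy_mode_sum: "periodic_xy (mode_sum (real n) (real n') F G)"
  by (simp add: periodic_xy_def mode_sum_def xcos_def ycos_def tcoord_def periodic_trig)

lemma periodic_xy_coupled_matrix: "periodic_xy (coupled_matrix (real n) (real n') a b p1 p2)"
  by (simp add: periodic_xy_def coupled_matrix_def entry11_def entry12_def entry21_def entry22_def
      xcos_def xsin_def ycos_def ysin_def tcoord_def periodic_trig vec_eq_iff forall_2)

lemma mode_sum_apply: "mode_sum k k' F G (x, y, t) = F t * cos (k * x) + G t * cos (k' * y)"
  by (simp add: mode_sum_def tcoord_def xcos_def ycos_def)

lemma has_grad_mode_sum:
  assumes F: "\<And>s. (F has_real_derivative F' s) (at s)" and G: "\<And>s. (G has_real_derivative G' s) (at s)"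
  shows "has_grad (mode_sum k k' F G)
    (\<lambda>p. - k * F (tcoord p) * xsin k p) (\<lambda>p. - k' * G (tcoord p) * ysin k' p) (mode_sum k k' F' G')"
  unfolding mode_sum_def [abs_def]
  by (rule has_grad_eq_rhs, (rule has_grad_add has_grad_mult has_grad_const has_grad_trig
        has_grad_time F G)+) (auto simp: fun_eq_iff)

lemma has_grad_mode_x:
  assumes F: "\<And>s. (F has_real_derivative F' s) (at s)"
  shows "has_grad (\<lambda>p. - k * F (tcoord p) * xsin k p)
    (\<lambda>p. - k\<^sup>2 * F (tcoord p) * xcos k p) (\<lambda>p. 0) (\<lambda>p. - k * F' (tcoord p) * xsin k p)"
  by (rule has_grad_eq_rhs, (rule has_grad_mult has_grad_const has_grad_trig has_grad_time F)+)
    (auto simp: fun_eq_iff power2_eq_square)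

lemma has_grad_mode_y:
  assumes G: "\<And>s. (G has_real_derivative G' s) (at s)"
  shows "has_grad (\<lambda>p. - k' * G (tcoord p) * ysin k' p)
    (\<lambda>p. 0) (\<lambda>p. - k'\<^sup>2 * G (tcoord p) * ycos k' p) (\<lambda>p. - k' * G' (tcoord p) * ysin k' p)"
  by (rule has_grad_eq_rhs, (rule has_grad_mult has_grad_const has_grad_trig has_grad_time G)+)
    (auto simp: fun_eq_iff power2_eq_square)

lemma C2_fun_mode_sum:
  assumes F: "C2_family F" and G: "C2_family G"
  shows "C2_fun (mode_sum k k' (F 0) (G 0))"
proof -
  note F = C2_familyD[OF F] and G = C2_familyD[OF G]
  show ?thesis
    by (rule C2_fun_has_grad[OF has_grad_mode_sum has_grad_mode_x has_grad_mode_y has_grad_mode_sum])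
      (use F G in \<open>auto simp: mode_sum_def [abs_def] intro!: continuous_intros continuous_on_time continuous_on_trig\<close>)
qed

context
  fixes k k' :: real and p1 p1' p2 p2' :: "real \<Rightarrow> real"
  assumes k: "k \<noteq> 0" "k' \<noteq> 0"
    and p1: "\<And>s. (p1 has_real_derivative p1' s) (at s)"
    and p2: "\<And>s. (p2 has_real_derivative p2' s) (at s)"
begin

lemma has_grad_entry11:
  "has_grad (entry11 k k' a p1) (\<lambda>p. - p1 (tcoord p) * xsin k p * ycos k' p)
     (\<lambda>p. - (k' / k) * p1 (tcoord p) * xcos k p * ysin k' p) (\<lambda>p. p1' (tcoord p) / k * xcos k p * ycos k' p)"
  unfolding entry11_def [abs_def]
  by (rule has_grad_eq_rhs, (rule has_grad_add has_grad_mult has_grad_divide_const has_grad_const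
        has_grad_trig has_grad_time p1)+) (use k in \<open>auto simp: fun_eq_iff field_simps\<close>)

lemma has_grad_entry12:
  "has_grad (entry12 k k' p2) (\<lambda>p. 2 * p2 (tcoord p) * xcos k p * ysin k' p)
     (\<lambda>p. 2 * (k' / k) * p2 (tcoord p) * xsin k p * ycos k' p) (\<lambda>p. 2 * p2' (tcoord p) / k * xsin k p * ysin k' p)"
  unfolding entry12_def [abs_def]
  by (rule has_grad_eq_rhs, (rule has_grad_add has_grad_mult has_grad_divide_const has_grad_const
        has_grad_trig has_grad_time p2)+) (use k in \<open>auto simp: fun_eq_iff field_simps\<close>)

lemma has_grad_entry21:
  "has_grad (entry21 k k' p1) (\<lambda>p. 2 * (k / k') * p1 (tcoord p) * xcos k p * ysin k' p)
     (\<lambda>p. 2 * p1 (tcoord p) * xsin k p * ycos k' p) (\<lambda>p. 2 * p1' (tcoord p) / k' * xsin k p * ysin k' p)"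
  unfolding entry21_def [abs_def]
  by (rule has_grad_eq_rhs, (rule has_grad_add has_grad_mult has_grad_divide_const has_grad_const
        has_grad_trig has_grad_time p1)+) (use k in \<open>auto simp: fun_eq_iff field_simps\<close>)

lemma has_grad_entry22:
  "has_grad (entry22 k k' b p2) (\<lambda>p. - (k / k') * p2 (tcoord p) * xsin k p * ycos k' p)
     (\<lambda>p. - p2 (tcoord p) * xcos k p * ysin k' p) (\<lambda>p. p2' (tcoord p) / k' * xcos k p * ycos k' p)"
  unfolding entry22_def [abs_def]
  by (rule has_grad_eq_rhs, (rule has_grad_add has_grad_mult has_grad_divide_const has_grad_const
        has_grad_trig has_grad_time p2)+) (use k in \<open>auto simp: fun_eq_iff field_simps\<close>)

end

lemma sdir_simps: "sdir 1 = ex" "sdir 2 = ey"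
  by (simp_all add: sdir_def)

lemma wave_op_coupled:
  assumes k: "k \<noteq> 0" "k' \<noteq> 0"
    and p1: "\<And>s. (p1 has_real_derivative p1' s) (at s)"
    and p2: "\<And>s. (p2 has_real_derivative p2' s) (at s)"
    and F: "C2_family F" and G: "C2_family G"
  shows "wave_op (coupled_matrix k k' a b p1 p2) (mode_sum k k' (F 0) (G 0)) p =
    (F 2 (tcoord p) - a * k\<^sup>2 * F 0 (tcoord p) - k' * p2 (tcoord p) * G 0 (tcoord p)) * xcos k p +
    (G 2 (tcoord p) - b * k'\<^sup>2 * G 0 (tcoord p) - k * p1 (tcoord p) * F 0 (tcoord p)) * ycos k' p"
proof -
  note F = C2_familyD[OF F] and G = C2_familyD[OF G]
  define A where "A = coupled_matrix k k' a b p1 p2"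
  define ux where "ux = (\<lambda>p. - k * F 0 (tcoord p) * xsin k p)"
  define uy where "uy = (\<lambda>p. - k' * G 0 (tcoord p) * ysin k' p)"
  have u: "has_grad (mode_sum k k' (F 0) (G 0)) ux uy (mode_sum k k' (F 1) (G 1))"
    unfolding ux_def uy_def by (rule has_grad_mode_sum F G)+
  have ut: "has_grad (mode_sum k k' (F 1) (G 1)) (\<lambda>p. - k * F 1 (tcoord p) * xsin k p)
      (\<lambda>p. - k' * G 1 (tcoord p) * ysin k' p) (mode_sum k k' (F 2) (G 2))"
    by (rule has_grad_mode_sum F G)+
  note ux = has_grad_mode_x[of "F 0" "F 1" k, folded ux_def, OF F(1)]
  note uy = has_grad_mode_y[of "G 0" "G 1" k', folded uy_def, OF G(1)]
  note entries = has_grad_entry11[OF k p1 p2] has_grad_entry12[OF k p1 p2]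
    has_grad_entry21[OF k p1 p2] has_grad_entry22[OF k p1 p2]
  have "wave_op A (mode_sum k k' (F 0) (G 0)) p =
     (F 2 (tcoord p) * xcos k p + G 2 (tcoord p) * ycos k' p)
     + ((- p1 (tcoord p) * xsin k p * ycos k' p) * ux p + entry11 k k' a p1 p * (- k\<^sup>2 * F 0 (tcoord p) * xcos k p))
     + ((2 * p2 (tcoord p) * xcos k p * ysin k' p) * uy p + entry12 k k' p2 p * 0)
     + ((2 * p1 (tcoord p) * xsin k p * ycos k' p) * ux p + entry21 k k' p1 p * 0)
     + ((- p2 (tcoord p) * xcos k p * ysin k' p) * uy p + entry22 k k' b p2 p * (- k'\<^sup>2 * G 0 (tcoord p) * ycos k' p))"
    unfolding wave_op_def sum_2 A_def coupled_matrix_entries sdir_simps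
      pd_has_grad_directions[OF u] pd_has_grad_directions[OF ut]
      pd_has_grad_directions(1)[OF has_grad_mult[OF entries(1) ux]]
      pd_has_grad_directions(1)[OF has_grad_mult[OF entries(2) uy]]
      pd_has_grad_directions(2)[OF has_grad_mult[OF entries(3) ux]]
      pd_has_grad_directions(2)[OF has_grad_mult[OF entries(4) uy]]
    by (simp add: mode_sum_def)
  moreover have "(xsin k p)\<^sup>2 = 1 - (xcos k p)\<^sup>2" "(ysin k' p)\<^sup>2 = 1 - (ycos k' p)\<^sup>2"
    by (simp_all add: xsin_def xcos_def ysin_def ycos_def sin_squared_eq)
  ultimately show ?thesis
    unfolding A_def ux_def uy_def entry11_def entry12_def entry21_def entry22_def
    using k by (simp add: field_simps power2_eq_square) algebra
qed

lemma quadratic_form_2: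
  fixes \<xi> :: "real^2" and M :: "real^2^2"
  shows "\<xi> \<bullet> (M *v \<xi>) = M$1$1 * (\<xi>$1)\<^sup>2 + (M$1$2 + M$2$1) * (\<xi>$1 * \<xi>$2) + M$2$2 * (\<xi>$2)\<^sup>2"
    and "(norm \<xi>)\<^sup>2 = (\<xi>$1)\<^sup>2 + (\<xi>$2)\<^sup>2"
  unfolding power2_norm_eq_inner
  by (simp_all add: matrix_vector_mult_def inner_vec_def sum_2 algebra_simps power2_eq_square)

lemma perturbed_diag_quadratic_bounds:
  fixes x y a b e1 e2 c :: real
  assumes "1/10 < a" "a < 10" "1/10 < b" "b < 10" "\<bar>e1\<bar> \<le> 1/100" "\<bar>e2\<bar> \<le> 1/100" "\<bar>c\<bar> \<le> 1/20"
  shows "inverse 20 * (x\<^sup>2 + y\<^sup>2) \<le> (a + e1) * x\<^sup>2 + c * (x * y) + (b + e2) * y\<^sup>2"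
    and "(a + e1) * x\<^sup>2 + c * (x * y) + (b + e2) * y\<^sup>2 \<le> 20 * (x\<^sup>2 + y\<^sup>2)"
proof -
  have "2 * \<bar>x * y\<bar> \<le> x\<^sup>2 + y\<^sup>2"
    using sum_squares_bound[of "\<bar>x\<bar>" "\<bar>y\<bar>"] by (simp add: abs_mult)
  moreover have "\<bar>c * (x * y)\<bar> \<le> 1/20 * \<bar>x * y\<bar>" "\<bar>e1 * x\<^sup>2\<bar> \<le> 1/100 * x\<^sup>2" "\<bar>e2 * y\<^sup>2\<bar> \<le> 1/100 * y\<^sup>2"
    unfolding abs_mult[of c] abs_mult[of e1] abs_mult[of e2] abs_power2
    by (rule mult_right_mono; use assms in simp)+
  moreover have "1/10 * x\<^sup>2 \<le> a * x\<^sup>2" "a * x\<^sup>2 \<le> 10 * x\<^sup>2" "1/10 * y\<^sup>2 \<le> b * y\<^sup>2" "b * y\<^sup>2 \<le> 10 * y\<^sup>2"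
    by (rule mult_right_mono; use assms in simp)+
  ultimately show "inverse 20 * (x\<^sup>2 + y\<^sup>2) \<le> (a + e1) * x\<^sup>2 + c * (x * y) + (b + e2) * y\<^sup>2"
    and "(a + e1) * x\<^sup>2 + c * (x * y) + (b + e2) * y\<^sup>2 \<le> 20 * (x\<^sup>2 + y\<^sup>2)"
    by (auto simp: algebra_simps abs_le_iff)
qed

lemma abs_mult_unit_factors_le: "\<bar>c\<bar> \<le> C \<Longrightarrow> \<bar>s\<bar> \<le> 1 \<Longrightarrow> \<bar>s'\<bar> \<le> 1 \<Longrightarrow> \<bar>c * s * s'\<bar> \<le> (C :: real)"
  using abs_mult_le_mult[of "c * s" C s' 1] abs_mult_le_mult[of c C s 1] by simp

lemma C1_fun_bounded_grad:
  assumes "has_grad f fx fy ft" "continuous_on UNIV fx" "continuous_on UNIV fy" "continuous_on UNIV ft"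
    "\<And>p. \<bar>fx p\<bar> \<le> C" "\<And>p. \<bar>fy p\<bar> \<le> C" "\<And>p. \<bar>ft p\<bar> \<le> C"
  shows "C1_fun f \<and> (\<forall>p v. v \<in> {ex, ey, et} \<longrightarrow> \<bar>pd f v p\<bar> \<le> C)"
  using C1_fun_has_grad[OF assms(1-4)] assms(5-7) pd_has_grad_directions[OF assms(1)] by auto

lemma entry_gradient_coefficients_bounded:
  fixes k k' :: real and p1 p1' p2 p2' :: "real \<Rightarrow> real"
  assumes k: "1 \<le> k" "k \<le> k'" "k' \<le> 2 * k"
    and small: "\<And>t. \<bar>p1 t\<bar> \<le> 1/100" "\<And>t. \<bar>p2 t\<bar> \<le> 1/100" "\<And>t. \<bar>p1' t\<bar> \<le> k" "\<And>t. \<bar>p2' t\<bar> \<le> k"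
  shows "\<bar>- p1 t\<bar> \<le> 10" "\<bar>- p2 t\<bar> \<le> 10" "\<bar>2 * p1 t\<bar> \<le> 10" "\<bar>2 * p2 t\<bar> \<le> 10"
    "\<bar>- (k' / k) * p1 t\<bar> \<le> 10" "\<bar>2 * (k' / k) * p2 t\<bar> \<le> 10"
    "\<bar>2 * (k / k') * p1 t\<bar> \<le> 10" "\<bar>- (k / k') * p2 t\<bar> \<le> 10"
    "\<bar>p1' t / k\<bar> \<le> 10" "\<bar>2 * p2' t / k\<bar> \<le> 10" "\<bar>2 * p1' t / k'\<bar> \<le> 10" "\<bar>p2' t / k'\<bar> \<le> 10"
proof -
  have ratio: "\<bar>- (k' / k)\<bar> \<le> 2" "\<bar>2 * (k' / k)\<bar> \<le> 4" "\<bar>2 * (k / k')\<bar> \<le> 2" "\<bar>- (k / k')\<bar> \<le> 1"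
    using k by (auto simp: field_simps)
  show "\<bar>- p1 t\<bar> \<le> 10" "\<bar>- p2 t\<bar> \<le> 10" "\<bar>2 * p1 t\<bar> \<le> 10" "\<bar>2 * p2 t\<bar> \<le> 10"
    using small(1,2)[of t] by auto
  show "\<bar>- (k' / k) * p1 t\<bar> \<le> 10"
    using abs_mult_le_mult[OF ratio(1) small(1)] by (rule order_trans) simp
  show "\<bar>2 * (k' / k) * p2 t\<bar> \<le> 10"
    using abs_mult_le_mult[OF ratio(2) small(2)] by (rule order_trans) simp
  show "\<bar>2 * (k / k') * p1 t\<bar> \<le> 10"
    using abs_mult_le_mult[OF ratio(3) small(1)] by (rule order_trans) simp
  show "\<bar>- (k / k') * p2 t\<bar> \<le> 10"
    using abs_mult_le_mult[OF ratio(4) small(2)] by (rule order_trans) simp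
  show "\<bar>p1' t / k\<bar> \<le> 10" "\<bar>2 * p2' t / k\<bar> \<le> 10" "\<bar>2 * p1' t / k'\<bar> \<le> 10" "\<bar>p2' t / k'\<bar> \<le> 10"
    using small(3,4)[of t] k by (auto simp: abs_divide abs_mult divide_le_eq)
qed

lemma coupled_matrix_elliptic:
  assumes k: "1 \<le> k" "1 \<le> k'" and ab: "1/10 < a" "a < 10" "1/10 < b" "b < 10"
    and small: "\<And>t. \<bar>p1 t\<bar> \<le> 1/100" "\<And>t. \<bar>p2 t\<bar> \<le> 1/100"
  shows "inverse 20 * (norm \<xi>)\<^sup>2 \<le> \<xi> \<bullet> (coupled_matrix k k' a b p1 p2 p *v \<xi>) \<and>
    \<xi> \<bullet> (coupled_matrix k k' a b p1 p2 p *v \<xi>) \<le> 20 * (norm \<xi>)\<^sup>2"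
proof -
  have "\<bar>p1 t / k\<bar> \<le> 1/100" "\<bar>p2 t / k'\<bar> \<le> 1/100" "\<bar>2 * p2 t / k\<bar> \<le> 1/50" "\<bar>2 * p1 t / k'\<bar> \<le> 1/50" for t
    using small(1,2)[of t] k by (auto simp: abs_divide divide_le_eq order_trans[OF _ mult_left_mono])
  then have "\<bar>p1 (tcoord p) / k * xcos k p * ycos k' p\<bar> \<le> 1/100"
    "\<bar>p2 (tcoord p) / k' * xcos k p * ycos k' p\<bar> \<le> 1/100"
    "\<bar>2 * p2 (tcoord p) / k * xsin k p * ysin k' p\<bar> \<le> 1/50"
    "\<bar>2 * p1 (tcoord p) / k' * xsin k p * ysin k' p\<bar> \<le> 1/50"
    by (intro abs_mult_unit_factors_le abs_trig_le_1; blast)+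
  then have "\<bar>2 * p2 (tcoord p) / k * xsin k p * ysin k' p + 2 * p1 (tcoord p) / k' * xsin k p * ysin k' p\<bar> \<le> 1/20"
    "\<bar>p1 (tcoord p) / k * xcos k p * ycos k' p\<bar> \<le> 1/100"
    "\<bar>p2 (tcoord p) / k' * xcos k p * ycos k' p\<bar> \<le> 1/100"
    by linarith+
  then show ?thesis
    unfolding quadratic_form_2 coupled_matrix_entries entry11_def entry12_def entry21_def entry22_def
    using perturbed_diag_quadratic_bounds[OF ab, of _ _ _ "\<xi>$1" "\<xi>$2"] by simp
qed

lemma coupled_matrix_entries_regular:
  assumes k: "1 \<le> k" "k \<le> k'" "k' \<le> 2 * k"
    and p1: "\<And>s. (p1 has_real_derivative p1' s) (at s)"
    and p2: "\<And>s. (p2 has_real_derivative p2' s) (at s)"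
    and cont: "continuous_on UNIV p1'" "continuous_on UNIV p2'"
    and small: "\<And>t. \<bar>p1 t\<bar> \<le> 1/100" "\<And>t. \<bar>p2 t\<bar> \<le> 1/100" "\<And>t. \<bar>p1' t\<bar> \<le> k" "\<And>t. \<bar>p2' t\<bar> \<le> k"
  shows "C1_fun (entry11 k k' a p1) \<and> (\<forall>p v. v \<in> {ex, ey, et} \<longrightarrow> \<bar>pd (entry11 k k' a p1) v p\<bar> \<le> 10)"
    and "C1_fun (entry12 k k' p2) \<and> (\<forall>p v. v \<in> {ex, ey, et} \<longrightarrow> \<bar>pd (entry12 k k' p2) v p\<bar> \<le> 10)"
    and "C1_fun (entry21 k k' p1) \<and> (\<forall>p v. v \<in> {ex, ey, et} \<longrightarrow> \<bar>pd (entry21 k k' p1) v p\<bar> \<le> 10)"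
    and "C1_fun (entry22 k k' b p2) \<and> (\<forall>p v. v \<in> {ex, ey, et} \<longrightarrow> \<bar>pd (entry22 k k' b p2) v p\<bar> \<le> 10)"
proof -
  have k0: "k \<noteq> 0" "k' \<noteq> 0"
    using k by auto
  note coef = entry_gradient_coefficients_bounded[OF k small]
  have cont_t: "continuous_on UNIV (\<lambda>p. q (tcoord p))" if "\<And>s. (q has_real_derivative q' s) (at s)" for q q'
    using that by (intro continuous_on_time) (auto intro!: DERIV_isCont simp: continuous_on_eq_continuous_at)
  note cont_all = continuous_on_time[OF cont(1)] continuous_on_time[OF cont(2)] cont_t[OF p1] cont_t[OF p2]
    continuous_on_trig
  show "C1_fun (entry11 k k' a p1) \<and> (\<forall>p v. v \<in> {ex, ey, et} \<longrightarrow> \<bar>pd (entry11 k k' a p1) v p\<bar> \<le> 10)"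
    by (rule C1_fun_bounded_grad[OF has_grad_entry11[OF k0 p1 p2]]; (intro continuous_intros cont_all k0 ballI)?;
      blast intro: abs_mult_unit_factors_le coef abs_trig_le_1)
  show "C1_fun (entry12 k k' p2) \<and> (\<forall>p v. v \<in> {ex, ey, et} \<longrightarrow> \<bar>pd (entry12 k k' p2) v p\<bar> \<le> 10)"
    by (rule C1_fun_bounded_grad[OF has_grad_entry12[OF k0 p1 p2]]; (intro continuous_intros cont_all k0 ballI)?;
      blast intro: abs_mult_unit_factors_le coef abs_trig_le_1)
  show "C1_fun (entry21 k k' p1) \<and> (\<forall>p v. v \<in> {ex, ey, et} \<longrightarrow> \<bar>pd (entry21 k k' p1) v p\<bar> \<le> 10)"
    by (rule C1_fun_bounded_grad[OF has_grad_entry21[OF k0 p1 p2]]; (intro continuous_intros cont_all k0 ballI)?;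
      blast intro: abs_mult_unit_factors_le coef abs_trig_le_1)
  show "C1_fun (entry22 k k' b p2) \<and> (\<forall>p v. v \<in> {ex, ey, et} \<longrightarrow> \<bar>pd (entry22 k k' b p2) v p\<bar> \<le> 10)"
    by (rule C1_fun_bounded_grad[OF has_grad_entry22[OF k0 p1 p2]]; (intro continuous_intros cont_all k0 ballI)?;
      blast intro: abs_mult_unit_factors_le coef abs_trig_le_1)
qed

lemma reg_class_coupled_matrix:
  assumes k: "1 \<le> k" "k \<le> k'" "k' \<le> 2 * k"
    and ab: "1/10 < a" "a < 10" "1/10 < b" "b < 10"
    and p1: "\<And>s. (p1 has_real_derivative p1' s) (at s)"
    and p2: "\<And>s. (p2 has_real_derivative p2' s) (at s)"
    and cont: "continuous_on UNIV p1'" "continuous_on UNIV p2'"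
    and small: "\<And>t. \<bar>p1 t\<bar> \<le> 1/100" "\<And>t. \<bar>p2 t\<bar> \<le> 1/100" "\<And>t. \<bar>p1' t\<bar> \<le> k" "\<And>t. \<bar>p2' t\<bar> \<le> k"
  shows "reg_class 20 10 (coupled_matrix k k' a b p1 p2)"
proof -
  have entry_fun: "(\<lambda>q. coupled_matrix k k' a b p1 p2 q $ 1 $ 1) = entry11 k k' a p1"
    "(\<lambda>q. coupled_matrix k k' a b p1 p2 q $ 1 $ 2) = entry12 k k' p2"
    "(\<lambda>q. coupled_matrix k k' a b p1 p2 q $ 2 $ 1) = entry21 k k' p1"
    "(\<lambda>q. coupled_matrix k k' a b p1 p2 q $ 2 $ 2) = entry22 k k' b p2"
    by (simp_all add: coupled_matrix_entries fun_eq_iff)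
  show ?thesis
    unfolding reg_class_def forall_2 entry_fun
    using coupled_matrix_entries_regular[OF k p1 p2 cont small]
      coupled_matrix_elliptic[of k k' a b p1 p2, OF _ _ ab small(1,2)] k by auto
qed

section \<open>The two constructions\<close>

lemma coupled_solution:
  fixes k k' :: nat and a b :: real and F G :: "nat \<Rightarrow> real \<Rightarrow> real"
    and p1 p1' p2 p2' :: "real \<Rightarrow> real"
  assumes k: "1 \<le> k" "k \<le> k'" "k' \<le> 2 * k"
    and ab: "1/10 < a" "a < 10" "1/10 < b" "b < 10"
    and F: "C2_family F" and G: "C2_family G"
    and p1: "\<And>s. (p1 has_real_derivative p1' s) (at s)"
    and p2: "\<And>s. (p2 has_real_derivative p2' s) (at s)"
    and cont: "continuous_on UNIV p1'" "continuous_on UNIV p2'"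
    and small: "\<And>t. \<bar>p1 t\<bar> \<le> 1/100" "\<And>t. \<bar>p2 t\<bar> \<le> 1/100" "\<And>t. \<bar>p1' t\<bar> \<le> k" "\<And>t. \<bar>p2' t\<bar> \<le> k"
    and ode: "\<And>t. F 2 t = a * (real k)\<^sup>2 * F 0 t + real k' * p2 t * G 0 t"
      "\<And>t. G 2 t = b * (real k')\<^sup>2 * G 0 t + real k * p1 t * F 0 t"
  defines "u \<equiv> mode_sum k k' (F 0) (G 0)" and "At \<equiv> coupled_matrix k k' a b p1 p2"
  shows "C2_fun u \<and> periodic_xy u \<and> periodic_xy At \<and> reg_class 20 10 At \<and> (\<forall>p. wave_op At u p = 0)"
proof -
  have "real k \<noteq> 0" "real k' \<noteq> 0"
    using k by auto
  then show ?thesis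
    unfolding u_def At_def
    using C2_fun_mode_sum[OF F G] periodic_xy_mode_sum periodic_xy_coupled_matrix
      reg_class_coupled_matrix[OF _ _ _ ab p1 p2 cont small] wave_op_coupled[OF _ _ p1 p2 F G] k
    by (simp add: ode)
qed

lemma construction_scales:
  fixes \<epsilon> a :: real and k :: nat
  assumes "0 < \<epsilon>" "\<epsilon> < 1/10^36" "1/10 < a" "a < 10" "\<epsilon> powr (-1/4) \<le> k" "k \<le> \<epsilon> powr (-1/3)"
  shows "0 < \<epsilon> powr (1/3)" "\<epsilon> powr (1/3) \<le> 1/10^12" "(\<epsilon> powr (1/3)) ^ 3 = \<epsilon>"
    and "10^9 \<le> real k" "0 \<le> k * sqrt a" "k * sqrt a \<le> 4 * real k" "k * sqrt a * \<epsilon> powr (1/3) \<le> 4"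
proof -
  note small = small_scales[OF assms(1,2,5,6)]
  show "0 < \<epsilon> powr (1/3)" "\<epsilon> powr (1/3) \<le> 1/10^12" "(\<epsilon> powr (1/3)) ^ 3 = \<epsilon>" "10^9 \<le> real k"
    using assms small cube_root_power[of \<epsilon> 0] by simp_all
  show "0 \<le> k * sqrt a" "k * sqrt a \<le> 4 * real k" "k * sqrt a * \<epsilon> powr (1/3) \<le> 4"
    using decay_rate_bounds[of a k "\<epsilon> powr (1/3)"] assms small by auto
qed

lemma switch_on_second_mode:
  fixes \<epsilon> a b :: real and k k' :: nat
  assumes \<epsilon>: "0 < \<epsilon>" "\<epsilon> < 1/10^36"
    and ab: "1/10 < a" "a < 10" "1/10 < b" "b < 10"
    and k: "1 \<le> k" "k \<le> k'" "k' \<le> 2 * k"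
    and k\<epsilon>: "\<epsilon> powr (-1/4) \<le> k" "k \<le> \<epsilon> powr (-1/3)" "\<epsilon> powr (-1/4) \<le> k'" "k' \<le> \<epsilon> powr (-1/3)"
  shows "\<exists>u At. C2_fun u \<and> periodic_xy u \<and> periodic_xy At \<and> reg_class 20 10 At \<and> (\<forall>p. wave_op At u p = 0) \<and>
    (\<forall>x y t. t \<le> 0 \<longrightarrow>
       u (x, y, t) = cos (real k * x) * exp (- real k * sqrt a * t) \<and> At (x, y, t) = diag_mat a b) \<and>
    (\<forall>x y t. \<epsilon> powr (1/3) \<le> t \<longrightarrow>
       u (x, y, t) = cos (real k * x) * exp (- real k * sqrt a * t)
         + \<epsilon> * (cos (real k' * y) * exp (- real k' * sqrt b * t)) \<and>
       At (x, y, t) = diag_mat a b) \<and>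
    (\<exists>F G. C2_derivs (\<epsilon> powr (1/3)) F \<and> C2_derivs (\<epsilon> powr (1/3)) G \<and>
       (\<forall>x y t. t \<in> {0..\<epsilon> powr (1/3)} \<longrightarrow> u (x, y, t) = F 0 t * cos (real k * x) + G 0 t * cos (real k' * y)) \<and>
       (\<forall>\<alpha>\<le>2. \<forall>t\<in>{0..\<epsilon> powr (1/3)}.
          \<bar>F \<alpha> t\<bar> \<le> 500000 * real k ^ \<alpha> * exp (- real k * sqrt a * t) \<and>
          \<bar>G \<alpha> t\<bar> \<le> 500000 * real k' ^ \<alpha> * \<epsilon> powr ((3 - real \<alpha>) / 3) * exp (- real k' * sqrt b * t)))"
proof -
  define T where "T = \<epsilon> powr (1/3)"
  define ra where "ra = k * sqrt a"
  define rb where "rb = k' * sqrt b"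
  note scales = construction_scales[OF \<epsilon> ab(1,2) k\<epsilon>(1,2), folded T_def]
    construction_scales[OF \<epsilon> ab(3,4) k\<epsilon>(3,4), folded T_def]
  have T: "0 < T" "T \<le> 1/10^12" "T ^ 3 = \<epsilon>" and K: "10^9 \<le> real k" "10^9 \<le> real k'"
    and ra: "0 \<le> ra" "ra \<le> 4 * real k" "ra * T \<le> 4" and rb: "0 \<le> rb" "rb \<le> 4 * real k'" "rb * T \<le> 4"
    using scales by (simp_all add: ra_def rb_def)
  interpret P: transition_profile smooth_step smooth_step1 smooth_step2 smooth_step3 T rb ra k
    by (rule transition_profile_smooth_step) (use T ra rb k in auto)
  define F where "F = exp_mode ra"
  have F: "C2_family F"
    unfolding F_def by (rule C2_family_exp_mode)
  have ode: "F 2 t = a * (real k)\<^sup>2 * F 0 t + real k' * 0 * P.profile 0 t"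
    "P.profile 2 t = b * (real k')\<^sup>2 * P.profile 0 t + real k * P.coupling t * F 0 t" for t
    using P.profile_ode[of t] ab by (simp_all add: F_def exp_mode_def ra_def rb_def power_mult_distrib)
  define u where "u = mode_sum k k' (F 0) (P.profile 0)"
  define At where "At = coupled_matrix k k' a b P.coupling (\<lambda>_. 0)"
  have "C2_fun u \<and> periodic_xy u \<and> periodic_xy At \<and> reg_class 20 10 At \<and> (\<forall>p. wave_op At u p = 0)"
    unfolding u_def At_def by (rule coupled_solution[where p1' = P.coupling' and p2' = "\<lambda>_. 0"])
      (use k ab F P.C2_family_profile P.coupling_deriv P.continuous_on_coupling' P.abs_coupling_small K T ode
        in auto)
  moreover have "P.profile 0 t = 0 \<and> P.coupling t = 0" if "t \<le> 0" for t
    using smooth_step_nonpos[of "t / T"] P.coupling_outside[of t] that T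
    by (simp add: P.profile_eqs divide_nonpos_pos)
  moreover have "P.profile 0 t = \<epsilon> * exp (- rb * t) \<and> P.coupling t = 0" if "T \<le> t" for t
    using smooth_step_ge_1[of "t / T"] P.coupling_outside[of t] that T by (simp add: P.profile_eqs)
  moreover have "\<bar>F \<alpha> t\<bar> \<le> 500000 * k ^ \<alpha> * exp (- ra * t)" if "\<alpha> \<le> 2" for \<alpha> t
    using abs_exp_mode_le[OF that ra(1,2), of t] by (simp add: F_def)
  moreover have "\<bar>P.profile \<alpha> t\<bar> \<le> 500000 * k' ^ \<alpha> * \<epsilon> powr ((3 - real \<alpha>) / 3) * exp (- rb * t)"
    if "\<alpha> \<le> 2" "t \<in> {0..T}" for \<alpha> t
    using P.abs_profile_le_scaled[OF that, of k' \<epsilon>] k \<epsilon> T_def by simp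
  ultimately show ?thesis
    unfolding T_def [symmetric]
    using C2_family_imp_C2_derivs[OF F] C2_family_imp_C2_derivs[OF P.C2_family_profile]
    by (intro exI[of _ u] exI[of _ At] exI[of _ F] exI[of _ P.profile] conjI)
      (auto simp: u_def At_def mode_sum_apply coupled_matrix_eq_diag tcoord_def F_def exp_mode_def ra_def rb_def)
qed

lemma switch_off_first_mode:
  fixes \<epsilon> a b :: real and k k' :: nat
  assumes \<epsilon>: "0 < \<epsilon>" "\<epsilon> < 1/10^36"
    and ab: "1/10 < a" "a < 10" "1/10 < b" "b < 10"
    and k: "1 \<le> k" "k \<le> k'" "k' \<le> 2 * k"
    and k\<epsilon>: "\<epsilon> powr (-1/4) \<le> k" "k \<le> \<epsilon> powr (-1/3)" "\<epsilon> powr (-1/4) \<le> k'" "k' \<le> \<epsilon> powr (-1/3)"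
  shows "\<exists>u At. C2_fun u \<and> periodic_xy u \<and> periodic_xy At \<and> reg_class 20 10 At \<and> (\<forall>p. wave_op At u p = 0) \<and>
    (\<forall>x y t. t \<le> 0 \<longrightarrow>
       u (x, y, t) = \<epsilon> * (cos (real k * x) * exp (- real k * sqrt a * t))
         + cos (real k' * y) * exp (- real k' * sqrt b * t) \<and>
       At (x, y, t) = diag_mat a b) \<and>
    (\<forall>x y t. \<epsilon> powr (1/3) \<le> t \<longrightarrow>
       u (x, y, t) = cos (real k' * y) * exp (- real k' * sqrt b * t) \<and> At (x, y, t) = diag_mat a b) \<and>
    (\<exists>F G. C2_derivs (\<epsilon> powr (1/3)) F \<and> C2_derivs (\<epsilon> powr (1/3)) G \<and>
       (\<forall>x y t. t \<in> {0..\<epsilon> powr (1/3)} \<longrightarrow> u (x, y, t) = F 0 t * cos (real k * x) + G 0 t * cos (real k' * y)) \<and>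
       (\<forall>\<alpha>\<le>2. \<forall>t\<in>{0..\<epsilon> powr (1/3)}.
          \<bar>F \<alpha> t\<bar> \<le> 500000 * real k ^ \<alpha> * \<epsilon> powr ((3 - real \<alpha>) / 3) * exp (- real k * sqrt a * t) \<and>
          \<bar>G \<alpha> t\<bar> \<le> 500000 * real k' ^ \<alpha> * exp (- real k' * sqrt b * t)))"
proof -
  define T where "T = \<epsilon> powr (1/3)"
  define ra where "ra = k * sqrt a"
  define rb where "rb = k' * sqrt b"
  note scales = construction_scales[OF \<epsilon> ab(1,2) k\<epsilon>(1,2), folded T_def]
    construction_scales[OF \<epsilon> ab(3,4) k\<epsilon>(3,4), folded T_def]
  have T: "0 < T" "T \<le> 1/10^12" "T ^ 3 = \<epsilon>" and K: "10^9 \<le> real k" "10^9 \<le> real k'"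
    and ra: "0 \<le> ra" "ra \<le> 4 * real k" "ra * T \<le> 4" and rb: "0 \<le> rb" "rb \<le> 4 * real k'" "rb * T \<le> 4"
    using scales by (simp_all add: ra_def rb_def)
  interpret P: transition_profile "\<lambda>s. 1 - smooth_step s" "\<lambda>s. - smooth_step1 s" "\<lambda>s. - smooth_step2 s"
    "\<lambda>s. - smooth_step3 s" T ra rb k'
    by (rule transition_profile_smooth_step_down) (use T ra rb k in auto)
  define G where "G = exp_mode rb"
  have G: "C2_family G"
    unfolding G_def by (rule C2_family_exp_mode)
  have ode: "P.profile 2 t = a * (real k)\<^sup>2 * P.profile 0 t + real k' * P.coupling t * G 0 t"
    "G 2 t = b * (real k')\<^sup>2 * G 0 t + real k * 0 * P.profile 0 t" for t
    using P.profile_ode[of t] ab by (simp_all add: G_def exp_mode_def ra_def rb_def power_mult_distrib)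
  define u where "u = mode_sum k k' (P.profile 0) (G 0)"
  define At where "At = coupled_matrix k k' a b (\<lambda>_. 0) P.coupling"
  have "C2_fun u \<and> periodic_xy u \<and> periodic_xy At \<and> reg_class 20 10 At \<and> (\<forall>p. wave_op At u p = 0)"
    unfolding u_def At_def by (rule coupled_solution[where p1' = "\<lambda>_. 0" and p2' = P.coupling'])
      (use k ab G P.C2_family_profile P.coupling_deriv P.continuous_on_coupling' P.abs_coupling_small K T ode
        in auto)
  moreover have "P.profile 0 t = \<epsilon> * exp (- ra * t) \<and> P.coupling t = 0" if "t \<le> 0" for t
    using smooth_step_nonpos[of "t / T"] P.coupling_outside[of t] that T
    by (simp add: P.profile_eqs divide_nonpos_pos)
  moreover have "P.profile 0 t = 0 \<and> P.coupling t = 0" if "T \<le> t" for t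
    using smooth_step_ge_1[of "t / T"] P.coupling_outside[of t] that T by (simp add: P.profile_eqs)
  moreover have "\<bar>G \<alpha> t\<bar> \<le> 500000 * k' ^ \<alpha> * exp (- rb * t)" if "\<alpha> \<le> 2" for \<alpha> t
    using abs_exp_mode_le[OF that rb(1,2), of t] by (simp add: G_def)
  moreover have "\<bar>P.profile \<alpha> t\<bar> \<le> 500000 * k ^ \<alpha> * \<epsilon> powr ((3 - real \<alpha>) / 3) * exp (- ra * t)"
    if "\<alpha> \<le> 2" "t \<in> {0..T}" for \<alpha> t
    using P.abs_profile_le_scaled[OF that, of k \<epsilon>] k \<epsilon> T_def by simp
  ultimately show ?thesis
    unfolding T_def [symmetric]
    using C2_family_imp_C2_derivs[OF G] C2_family_imp_C2_derivs[OF P.C2_family_profile]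
    by (intro exI[of _ u] exI[of _ At] exI[of _ P.profile] exI[of _ G] conjI)
      (auto simp: u_def At_def mode_sum_apply coupled_matrix_eq_diag tcoord_def G_def exp_mode_def ra_def rb_def)
qed

theorem mainTheorem13:
  shows "\<exists>D>0. \<exists>M::real. \<forall>\<epsilon>::real. \<forall>a b::real. \<forall>k k'::nat.
    0 < \<epsilon> \<and> \<epsilon> < D \<and> 1/10 < a \<and> a < 10 \<and> 1/10 < b \<and> b < 10 \<and>
    1 \<le> k \<and> k \<le> k' \<and> k' \<le> 2 * k \<and>
    \<epsilon> powr (-1/4) \<le> real k \<and> real k \<le> \<epsilon> powr (-1/3) \<and>
    \<epsilon> powr (-1/4) \<le> real k' \<and> real k' \<le> \<epsilon> powr (-1/3)
    \<longrightarrow>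
    (let T = \<epsilon> powr (1/3);
         A = (\<lambda>p::pt. diag_mat a b);
         u1 = (\<lambda>(x, y, t). cos (real k * x) * exp (- real k * sqrt a * t));
         u2 = (\<lambda>(x, y, t). cos (real k' * y) * exp (- real k' * sqrt b * t))
     in
     \<comment> \<open>(i)\<close>
     (\<exists>u At. C2_fun u \<and> periodic_xy u \<and> periodic_xy At \<and> reg_class 20 10 At \<and>
        (\<forall>p. wave_op At u p = 0) \<and>
        (\<forall>x y t. t \<le> 0 \<longrightarrow> u (x, y, t) = u1 (x, y, t) \<and> At (x, y, t) = A (x, y, t)) \<and>
        (\<forall>x y t. T \<le> t \<longrightarrow> u (x, y, t) = u1 (x, y, t) + \<epsilon> * u2 (x, y, t) \<and> At (x, y, t) = A (x, y, t)) \<and>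
        (\<exists>F G. C2_derivs T F \<and> C2_derivs T G \<and>
           (\<forall>x y t. t \<in> {0..T} \<longrightarrow>
              u (x, y, t) = F 0 t * cos (real k * x) + G 0 t * cos (real k' * y)) \<and>
           (\<forall>\<alpha>\<le>2. \<forall>t\<in>{0..T}.
              \<bar>F \<alpha> t\<bar> \<le> M * real k ^ \<alpha> * exp (- real k * sqrt a * t) \<and>
              \<bar>G \<alpha> t\<bar> \<le> M * real k' ^ \<alpha> * \<epsilon> powr ((3 - real \<alpha>) / 3) * exp (- real k' * sqrt b * t)))) \<and>
     \<comment> \<open>(ii)\<close>
     (\<exists>u At. C2_fun u \<and> periodic_xy u \<and> periodic_xy At \<and> reg_class 20 10 At \<and>
        (\<forall>p. wave_op At u p = 0) \<and>
        (\<forall>x y t. t \<le> 0 \<longrightarrow> u (x, y, t) = \<epsilon> * u1 (x, y, t) + u2 (x, y, t) \<and> At (x, y, t) = A (x, y, t)) \<and>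
        (\<forall>x y t. T \<le> t \<longrightarrow> u (x, y, t) = u2 (x, y, t) \<and> At (x, y, t) = A (x, y, t)) \<and>
        (\<exists>F G. C2_derivs T F \<and> C2_derivs T G \<and>
           (\<forall>x y t. t \<in> {0..T} \<longrightarrow>
              u (x, y, t) = F 0 t * cos (real k * x) + G 0 t * cos (real k' * y)) \<and>
           (\<forall>\<alpha>\<le>2. \<forall>t\<in>{0..T}.
              \<bar>F \<alpha> t\<bar> \<le> M * real k ^ \<alpha> * \<epsilon> powr ((3 - real \<alpha>) / 3) * exp (- real k * sqrt a * t) \<and>
              \<bar>G \<alpha> t\<bar> \<le> M * real k' ^ \<alpha> * exp (- real k' * sqrt b * t)))))"
proof (rule exI[of _ "1/10^36"], intro conjI exI[of _ 500000] allI impI)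
  show "(0 :: real) < 1/10^36"
    by simp
qed (unfold Let_def prod.case, elim conjE, intro conjI switch_on_second_mode switch_off_first_mode, assumption+)

end
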